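(* Let $\Delta$ be a quasi-forest on $[n]$ with $s+1$ facets, of dimension $d-1$, with $f$-vector $(f_0,\ldots,f_{d-1})$, and put $f_{-1}=1$. Let $F_{s+1}, F_s, \ldots, F_1$ be a leaf order of $\Delta$ (so that for each $1\le j\le s$, $F_j$ is a leaf of $\langle F_{s+1},F_s,\ldots,F_j\rangle$). For each $1\le j\le s$ let $G_j$ be a branch of the leaf $F_j$ in $\langle F_{s+1},F_s,\ldots,F_j\rangle$. Let $\delta_j=|F_j|$ for $1\le j\le s+1$ and $e_j=|F_j\cap G_j|$ for $1\le j\le s$. Then: (a) $\sum_{i=0}^{d} f_{i-1}x^i = \sum_{j=1}^{s+1}(1+x)^{\delta_j} - \sum_{j=1}^{s}(1+x)^{e_j}$; (b) if $k_1\cdots k_{s+1}$ is a permutation of $[s+1]$ with $0<\delta_{k_1}\le\cdots\le\delta_{k_s}\le\delta_{k_{s+1}}=d$ and $\ell_1\cdots\ell_s$ is a permutation of $[s]$ with $0\le e_{\ell_1}\le\cdots\le e_{\ell_s}$, then $e_{\ell_j}<\delta_{k_j}$ for all $1\le j\le s$.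
   Context: A simplicial complex $\Delta$ on $[n]$ is a collection of subsets of $[n]$ containing all singletons and closed under taking subsets; $\dim\Delta=d-1$ where $d$ is the maximal face size; facets are maximal faces; $f_i$ is the number of faces with $i+1$ elements. For facets $F_{i_1},\ldots,F_{i_q}$, $\langle F_{i_1},\ldots,F_{i_q}\rangle$ is the subcomplex of all faces contained in some $F_{i_j}$. A facet $F$ of a complex is a leaf if there is another facet $G\neq F$ (a branch of $F$) with $H\cap F\subset G\cap F$ for all facets $H\neq F$. A quasi-forest is a simplicial complex whose facets admit an ordering (a leaf order) $H_1,\ldots,H_m$ such that for each $1<j\le m$, $H_j$ is a leaf of $\langle H_1,\ldots,H_j\rangle$. *)

theory Defs
  imports "HOL-Computational_Algebra.Polynomial"
begin

definition simplicial_complex :: "nat \<Rightarrow> nat set set \<Rightarrow> bool" where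
  "simplicial_complex n \<Delta> \<longleftrightarrow>
     (\<forall>A\<in>\<Delta>. A \<subseteq> {1..n}) \<and>
     (\<forall>i\<in>{1..n}. {i} \<in> \<Delta>) \<and>
     (\<forall>A\<in>\<Delta>. \<forall>B. B \<subseteq> A \<longrightarrow> B \<in> \<Delta>)"

definition facets :: "'a set set \<Rightarrow> 'a set set" where
  "facets \<Gamma> = {F \<in> \<Gamma>. \<forall>G\<in>\<Gamma>. F \<subseteq> G \<longrightarrow> G = F}"

definition gen :: "'a set set \<Rightarrow> 'a set set" where
  "gen S = {A. \<exists>F\<in>S. A \<subseteq> F}"

definition is_branch :: "'a set set \<Rightarrow> 'a set \<Rightarrow> 'a set \<Rightarrow> bool" where
  "is_branch \<Gamma> F G \<longleftrightarrow> F \<in> facets \<Gamma> \<and> G \<in> facets \<Gamma> \<and> G \<noteq> F \<and>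
     (\<forall>H\<in>facets \<Gamma>. H \<noteq> F \<longrightarrow> H \<inter> F \<subseteq> G \<inter> F)"

definition is_leaf :: "'a set set \<Rightarrow> 'a set \<Rightarrow> bool" where
  "is_leaf \<Gamma> F \<longleftrightarrow> (\<exists>G. is_branch \<Gamma> F G)"

definition quasi_forest :: "nat \<Rightarrow> nat set set \<Rightarrow> bool" where
  "quasi_forest n \<Delta> \<longleftrightarrow> simplicial_complex n \<Delta> \<and>
     (\<exists>(H::nat \<Rightarrow> nat set) m. inj_on H {1..m} \<and> H ` {1..m} = facets \<Delta> \<and>
        (\<forall>j\<in>{2..m}. is_leaf (gen (H ` {1..j})) (H j)))"

text \<open>fcount \<Delta> i = f_{i-1} = number of faces with i elements.\<close>
definition fcount :: "'a set set \<Rightarrow> nat \<Rightarrow> nat" where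
  "fcount \<Delta> i = card {A \<in> \<Delta>. card A = i}"

end

(* Write f(K) = sum over the faces A of K of x^|A|, so that f of the full simplex on a
   delta-element set is (1+x)^delta.  Peeling off the leaves in order, the complex
   <F_j, ..., F_(s+1)> is the union of the simplex on F_j and <F_(j+1), ..., F_(s+1)>, and since
   G_j is a branch the two meet exactly in the simplex on F_j /\ G_j; inclusion-exclusion
   gives (a).
   For (b): G_j = F_v for some v > j, and F_j /\ G_j is a proper subset of both F_j and F_v,
   so e_j < delta_j and e_j < delta_v.  Given a threshold t reached by some e_i, take j maximal
   with e_j >= t: the indices i with e_i >= t, together with v, are more than the e's reaching t,
   and their delta's all exceed t.  Comparing these counts at t = e_(l_j) with the two sorted
   orders gives e_(l_j) < delta_(k_j). *)
theory Submission
  imports Defs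
begin

definition face_poly :: "'a set set \<Rightarrow> 'b::comm_ring_1 poly" where
  "face_poly K = (\<Sum>A\<in>K. monom 1 (card A))"

lemma face_poly_Pow:
  assumes "finite A"
  shows "face_poly (Pow A) = ([:1, 1:] :: 'b::comm_ring_1 poly) ^ card A"
  using assms
proof (induction A rule: finite_induct)
  case empty
  then show ?case by (simp add: face_poly_def monom_0 one_pCons)
next
  case (insert a A)
  have inj: "inj_on (insert a) (Pow A)"
    using insert by (auto simp: inj_on_def)
  have card_insert: "card (insert a B) = Suc (card B)" if "B \<in> Pow A" for B
    using insert that by (meson PowD card_insert_disjoint finite_subset subsetD)
  have "face_poly (Pow (insert a A))
      = face_poly (Pow A) + (\<Sum>B\<in>insert a ` Pow A. monom (1::'b) (card B))"
    unfolding face_poly_def Pow_insert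
    using insert by (intro sum.union_disjoint) auto
  also have "(\<Sum>B\<in>insert a ` Pow A. monom (1::'b) (card B)) = [:0, 1:] * face_poly (Pow A)"
    by (simp add: sum.reindex[OF inj] card_insert monom_Suc face_poly_def sum_distrib_left)
  finally show ?case
    using insert by (simp add: algebra_simps)
qed

lemma face_poly_Un:
  assumes "finite A" "finite B"
  shows "face_poly (A \<union> B) = (face_poly A + face_poly B - face_poly (A \<inter> B) :: 'b::comm_ring_1 poly)"
  unfolding face_poly_def using sum.union_inter[OF assms] by (simp add: algebra_simps)

lemma sum_fcount_monom_eq_face_poly:
  assumes "finite K" "\<forall>A\<in>K. card A \<le> d"
  shows "(\<Sum>i=0..d. monom (of_nat (fcount K i)) i) = (face_poly K :: 'b::comm_ring_1 poly)"
proof -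
  have "face_poly K = (\<Sum>i=0..d. \<Sum>A\<in>{A\<in>K. card A = i}. monom (1::'b) (card A))"
    unfolding face_poly_def using assms by (intro sum.group[symmetric]) auto
  also have "\<dots> = (\<Sum>i=0..d. monom (of_nat (fcount K i)) i)"
    by (simp add: fcount_def of_nat_poly smult_monom)
  finally show ?thesis by simp
qed

definition antichain :: "'a set set \<Rightarrow> bool" where
  "antichain S \<longleftrightarrow> (\<forall>A\<in>S. \<forall>B\<in>S. A \<subseteq> B \<longrightarrow> A = B)"

lemma antichain_facets: "antichain (facets \<Gamma>)"
  unfolding antichain_def facets_def by blast

lemma antichain_subset: "antichain S \<Longrightarrow> T \<subseteq> S \<Longrightarrow> antichain T"
  unfolding antichain_def by blast

lemma mem_gen: "A \<in> gen S \<longleftrightarrow> (\<exists>F\<in>S. A \<subseteq> F)"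
  by (simp add: gen_def)

lemma mem_facets: "F \<in> facets \<Gamma> \<longleftrightarrow> F \<in> \<Gamma> \<and> (\<forall>G\<in>\<Gamma>. F \<subseteq> G \<longrightarrow> G = F)"
  by (simp add: facets_def)

lemma facets_gen:
  assumes "antichain S"
  shows "facets (gen S) = S"
proof
  show "facets (gen S) \<subseteq> S"
  proof
    fix F assume F: "F \<in> facets (gen S)"
    then have "F \<in> gen S"
      by (simp add: mem_facets)
    then obtain H where "H \<in> S" "F \<subseteq> H"
      by (auto simp: mem_gen)
    then have "H \<in> gen S"
      by (auto simp: mem_gen)
    with F \<open>F \<subseteq> H\<close> have "H = F"
      unfolding mem_facets by blast
    then show "F \<in> S"
      using \<open>H \<in> S\<close> by simp
  qed
  show "S \<subseteq> facets (gen S)"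
  proof
    fix F assume "F \<in> S"
    have "B = F" if "B \<in> gen S" "F \<subseteq> B" for B
    proof -
      obtain H where "H \<in> S" "B \<subseteq> H"
        using \<open>B \<in> gen S\<close> by (auto simp: mem_gen)
      then have "F \<subseteq> H"
        using \<open>F \<subseteq> B\<close> by blast
      then have "F = H"
        using assms \<open>F \<in> S\<close> \<open>H \<in> S\<close> unfolding antichain_def by blast
      then show "B = F"
        using \<open>B \<subseteq> H\<close> \<open>F \<subseteq> B\<close> by blast
    qed
    moreover have "F \<in> gen S"
      using \<open>F \<in> S\<close> by (auto simp: mem_gen)
    ultimately show "F \<in> facets (gen S)"
      unfolding mem_facets by blast
  qed
qed

lemma gen_facets:
  assumes "finite \<Gamma>" and closed: "\<And>A B. A \<in> \<Gamma> \<Longrightarrow> B \<subseteq> A \<Longrightarrow> B \<in> \<Gamma>"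
  shows "gen (facets \<Gamma>) = \<Gamma>"
proof
  show "gen (facets \<Gamma>) \<subseteq> \<Gamma>"
    using closed unfolding gen_def facets_def by blast
  show "\<Gamma> \<subseteq> gen (facets \<Gamma>)"
  proof
    fix A assume "A \<in> \<Gamma>"
    then obtain M where "M \<in> \<Gamma>" "A \<subseteq> M" "\<forall>B\<in>\<Gamma>. M \<subseteq> B \<longrightarrow> M = B"
      using finite_has_maximal2[OF \<open>finite \<Gamma>\<close>] by blast
    then show "A \<in> gen (facets \<Gamma>)"
      unfolding gen_def facets_def by blast
  qed
qed

lemma gen_insert: "gen (insert A S) = Pow A \<union> gen S"
  unfolding gen_def by auto

lemma Pow_Int_gen:
  assumes "G \<in> S" "\<forall>H\<in>S. H \<inter> A \<subseteq> G"
  shows "Pow A \<inter> gen S = Pow (A \<inter> G)"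
  using assms unfolding gen_def by blast

lemma finite_gen: "finite S \<Longrightarrow> \<forall>A\<in>S. finite A \<Longrightarrow> finite (gen S)"
proof -
  assume "finite S" "\<forall>A\<in>S. finite A"
  then have "gen S = (\<Union>A\<in>S. Pow A)"
    unfolding gen_def by auto
  then show ?thesis
    using \<open>finite S\<close> \<open>\<forall>A\<in>S. finite A\<close> by simp
qed

lemma simplicial_complex_finite:
  assumes "simplicial_complex n \<Delta>"
  shows "finite \<Delta>" and "A \<in> \<Delta> \<Longrightarrow> finite A"
proof -
  have "\<Delta> \<subseteq> Pow {1..n}"
    using assms by (auto simp: simplicial_complex_def)
  then show "finite \<Delta>"
    by (rule finite_subset) simp
  show "A \<in> \<Delta> \<Longrightarrow> finite A"
    using \<open>\<Delta> \<subseteq> Pow {1..n}\<close> by (meson PowD finite_atLeastAtMost finite_subset subsetD)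
qed

lemma simplicial_complex_gen_facets:
  assumes "simplicial_complex n \<Delta>"
  shows "gen (facets \<Delta>) = \<Delta>"
proof (rule gen_facets)
  show "finite \<Delta>"
    using assms by (rule simplicial_complex_finite)
  have "\<forall>A\<in>\<Delta>. \<forall>B. B \<subseteq> A \<longrightarrow> B \<in> \<Delta>"
    using assms by (simp add: simplicial_complex_def)
  then show "\<And>A B. A \<in> \<Delta> \<Longrightarrow> B \<subseteq> A \<Longrightarrow> B \<in> \<Delta>"
    by blast
qed

lemma is_branch_gen:
  assumes "antichain S" "is_branch (gen S) F G"
  shows "F \<in> S" "G \<in> S" "G \<noteq> F" "\<And>H. H \<in> S \<Longrightarrow> H \<noteq> F \<Longrightarrow> H \<inter> F \<subseteq> G"
  using assms by (auto simp: is_branch_def facets_gen)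

locale leaf_order =
  fixes s :: nat and F G :: "nat \<Rightarrow> 'a set"
  assumes inj: "inj_on F {1..s+1}"
    and antichain: "antichain (F ` {1..s+1})"
    and finite: "\<And>i. i \<in> {1..s+1} \<Longrightarrow> finite (F i)"
    and branch: "\<And>j. j \<in> {1..s} \<Longrightarrow> is_branch (gen (F ` {j..s+1})) (F j) (G j)"
begin

lemma branch_later_Int:
  assumes j: "j \<in> {1..s}"
  shows "G j \<in> F ` {j+1..s+1}" and "\<And>i. i \<in> {j+1..s+1} \<Longrightarrow> F i \<inter> F j \<subseteq> G j"
proof -
  have antichain_j: "antichain (F ` {j..s+1})"
    using j by (intro antichain_subset[OF antichain]) auto
  note is_branch = is_branch_gen[OF antichain_j branch[OF j]]
  have F_ne: "F i \<noteq> F j" if "i \<in> {j+1..s+1}" for i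
    using inj_onD[OF inj, of i j] that j by auto
  obtain v where "v \<in> {j..s+1}" "G j = F v"
    using is_branch(2) by blast
  moreover have "v \<noteq> j"
    using is_branch(3) \<open>G j = F v\<close> by blast
  ultimately show "G j \<in> F ` {j+1..s+1}"
    by auto
  show "F i \<inter> F j \<subseteq> G j" if "i \<in> {j+1..s+1}" for i
    using is_branch(4)[of "F i"] F_ne[OF that] that by auto
qed

lemma face_poly_gen_from:
  assumes "j \<in> {1..s+1}"
  shows "face_poly (gen (F ` {j..s+1}))
    = (\<Sum>i=j..s+1. [:1, 1:] ^ card (F i)) - (\<Sum>i=j..s. ([:1, 1:] :: 'b::comm_ring_1 poly) ^ card (F i \<inter> G i))"
proof -
  let ?X = "[:1, 1:] :: 'b poly"
  have "j \<le> s + 1" "1 \<le> j"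
    using assms by auto
  then show ?thesis
  proof (induction j rule: inc_induct)
    case base
    have "gen (F ` {s+1..s+1}) = Pow (F (s+1))"
      by (auto simp: gen_def)
    then show ?case
      using finite[of "s+1"] by (simp add: face_poly_Pow)
  next
    case (step j)
    have j: "j \<in> {1..s}"
      using step by auto
    have finite_Int: "finite (F j \<inter> G j)"
      using finite[of j] j by simp
    have "F ` {j..s+1} = insert (F j) (F ` {j+1..s+1})"
      using step.hyps by (auto simp: atLeastAtMost_insertL[symmetric])
    then have gen_j: "gen (F ` {j..s+1}) = Pow (F j) \<union> gen (F ` {j+1..s+1})"
      by (simp add: gen_insert)
    have Int_j: "Pow (F j) \<inter> gen (F ` {j+1..s+1}) = Pow (F j \<inter> G j)"
      using branch_later_Int[OF j] by (intro Pow_Int_gen) auto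
    have "finite (gen (F ` {j+1..s+1}))"
      using finite step.prems by (intro finite_gen) auto
    then have "face_poly (gen (F ` {j..s+1}))
        = face_poly (Pow (F j)) + face_poly (gen (F ` {j+1..s+1}))
          - face_poly (Pow (F j) \<inter> gen (F ` {j+1..s+1}))"
      unfolding gen_j using finite[of j] j by (intro face_poly_Un) auto
    also have "\<dots> = ?X ^ card (F j) + face_poly (gen (F ` {j+1..s+1})) - ?X ^ card (F j \<inter> G j)"
      unfolding Int_j using finite[of j] j finite_Int by (simp add: face_poly_Pow del: Pow_Int_eq)
    finally show ?case
      using step by (simp add: sum.atLeast_Suc_atMost)
  qed
qed

lemma card_Int_branch_less:
  assumes j: "j \<in> {1..s}"
  shows "card (F j \<inter> G j) < card (F j)" and "\<exists>v\<in>{j+1..s+1}. card (F j \<inter> G j) < card (F v)"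
proof -
  obtain v where v: "v \<in> {j+1..s+1}" "G j = F v"
    using branch_later_Int(1)[OF j] by blast
  have "F j \<noteq> F v"
    using inj_onD[OF inj, of j v] v j by auto
  moreover have "F j \<in> F ` {1..s+1}" "F v \<in> F ` {1..s+1}"
    using v j by auto
  ultimately have "\<not> F j \<subseteq> F v" "\<not> F v \<subseteq> F j"
    using antichain unfolding antichain_def by blast+
  then have "card (F j \<inter> F v) < card (F j)" "card (F j \<inter> F v) < card (F v)"
    using finite[of j] finite[of v] v j by (auto intro!: psubset_card_mono)
  then show "card (F j \<inter> G j) < card (F j)" "\<exists>v\<in>{j+1..s+1}. card (F j \<inter> G j) < card (F v)"
    using v by auto
qed

end

lemma leaf_order_facets:
  assumes sc: "simplicial_complex n \<Delta>"
    and inj: "inj_on F {1..s+1}" and F_facets: "F ` {1..s+1} = facets \<Delta>"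
    and branch: "\<And>j. j \<in> {1..s} \<Longrightarrow> is_branch (gen (F ` {j..s+1})) (F j) (G j)"
  shows "leaf_order s F G"
proof
  show "inj_on F {1..s+1}"
    by (fact inj)
  show "antichain (F ` {1..s+1})"
    unfolding F_facets by (rule antichain_facets)
  show "finite (F i)" if "i \<in> {1..s+1}" for i
  proof (rule simplicial_complex_finite(2)[OF sc])
    have "F i \<in> facets \<Delta>"
      using that F_facets by blast
    then show "F i \<in> \<Delta>"
      by (simp add: facets_def)
  qed
qed (fact branch)

lemma card_superlevel_less:
  fixes \<delta> e :: "nat \<Rightarrow> 'b::linorder"
  assumes below_self: "\<And>j. j \<in> {1..s} \<Longrightarrow> e j < \<delta> j"
    and below_later: "\<And>j. j \<in> {1..s} \<Longrightarrow> \<exists>v\<in>{j+1..s+1}. e j < \<delta> v"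
    and "\<exists>i\<in>{1..s}. t \<le> e i"
  shows "card {i\<in>{1..s}. t \<le> e i} < card {i\<in>{1..s+1}. t < \<delta> i}"
proof -
  define E where "E = {i\<in>{1..s}. t \<le> e i}"
  have "finite E" "E \<noteq> {}"
    using assms(3) by (auto simp: E_def)
  define m where "m = Max E"
  have "m \<in> E"
    unfolding m_def using \<open>finite E\<close> \<open>E \<noteq> {}\<close> by (rule Max_in)
  then have "m \<in> {1..s}"
    by (simp add: E_def)
  then obtain v where v: "v \<in> {m+1..s+1}" "e m < \<delta> v"
    using below_later by blast
  have "v \<notin> E"
    using v Max_ge[OF \<open>finite E\<close>] by (fastforce simp: m_def)
  have "insert v E \<subseteq> {i\<in>{1..s+1}. t < \<delta> i}"
    using v \<open>m \<in> E\<close> below_self by (force simp: E_def)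
  then have "card (insert v E) \<le> card {i\<in>{1..s+1}. t < \<delta> i}"
    by (intro card_mono) auto
  then show ?thesis
    using \<open>finite E\<close> \<open>v \<notin> E\<close> by (simp add: E_def)
qed

lemma card_superlevel_sorted_perm_ge:
  fixes k :: "nat \<Rightarrow> nat" and f :: "nat \<Rightarrow> 'b::linorder"
  assumes "bij_betw k {1..m} {1..m}"
    and sorted: "\<And>i j. 1 \<le> i \<Longrightarrow> i \<le> j \<Longrightarrow> j \<le> m \<Longrightarrow> f (k i) \<le> f (k j)"
    and "j \<in> {1..m}"
  shows "m + 1 - j \<le> card {i\<in>{1..m}. f (k j) \<le> f i}"
proof -
  have "{j..m} \<subseteq> {1..m}"
    using assms(3) by auto
  then have "inj_on k {j..m}"
    using assms(1) by (auto simp: bij_betw_def intro: inj_on_subset)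
  then have "m + 1 - j = card (k ` {j..m})"
    by (simp add: card_image)
  also have "\<dots> \<le> card {i\<in>{1..m}. f (k j) \<le> f i}"
  proof (intro card_mono)
    show "k ` {j..m} \<subseteq> {i\<in>{1..m}. f (k j) \<le> f i}"
      using assms(1) sorted \<open>{j..m} \<subseteq> {1..m}\<close> assms(3) by (force simp: bij_betw_def)
  qed simp
  finally show ?thesis .
qed

lemma card_strict_superlevel_sorted_perm_le:
  fixes k :: "nat \<Rightarrow> nat" and f :: "nat \<Rightarrow> 'b::linorder"
  assumes "bij_betw k {1..m} {1..m}"
    and sorted: "\<And>i j. 1 \<le> i \<Longrightarrow> i \<le> j \<Longrightarrow> j \<le> m \<Longrightarrow> f (k i) \<le> f (k j)"
    and "j \<in> {1..m}"
  shows "card {i\<in>{1..m}. f (k j) < f i} \<le> m - j"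
proof -
  have "{i\<in>{1..m}. f (k j) < f i} \<subseteq> k ` {j+1..m}"
  proof
    fix x assume x: "x \<in> {i\<in>{1..m}. f (k j) < f i}"
    then have "x \<in> k ` {1..m}"
      using assms(1) by (simp add: bij_betw_def)
    then obtain p where p: "p \<in> {1..m}" "x = k p"
      by blast
    have "j < p"
      using sorted[of p j] p x assms(3) by (cases "j < p") auto
    then show "x \<in> k ` {j+1..m}"
      using p by auto
  qed
  then have "card {i\<in>{1..m}. f (k j) < f i} \<le> card (k ` {j+1..m})"
    by (intro card_mono) auto
  also have "\<dots> \<le> m - j"
    using card_image_le[of "{j+1..m}" k] by simp
  finally show ?thesis .
qed

lemma sorted_perm_less:
  fixes \<delta> e :: "nat \<Rightarrow> 'b::linorder"
  assumes count: "\<And>t. \<exists>i\<in>{1..s}. t \<le> e i \<Longrightarrow>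
      card {i\<in>{1..s}. t \<le> e i} < card {i\<in>{1..s+1}. t < \<delta> i}"
    and k: "bij_betw k {1..s+1} {1..s+1}"
    and k_sorted: "\<And>i j. 1 \<le> i \<Longrightarrow> i \<le> j \<Longrightarrow> j \<le> s+1 \<Longrightarrow> \<delta> (k i) \<le> \<delta> (k j)"
    and l: "bij_betw l {1..s} {1..s}"
    and l_sorted: "\<And>i j. 1 \<le> i \<Longrightarrow> i \<le> j \<Longrightarrow> j \<le> s \<Longrightarrow> e (l i) \<le> e (l j)"
    and j: "j \<in> {1..s}"
  shows "e (l j) < \<delta> (k j)"
proof (rule ccontr)
  assume "\<not> e (l j) < \<delta> (k j)"
  have "l j \<in> {1..s}"
    using l j by (auto simp: bij_betw_def)
  have "s + 1 - j \<le> card {i\<in>{1..s}. e (l j) \<le> e i}"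
    by (rule card_superlevel_sorted_perm_ge[where f = e, OF l l_sorted j])
  also have "\<dots> < card {i\<in>{1..s+1}. e (l j) < \<delta> i}"
    using \<open>l j \<in> {1..s}\<close> by (intro count) auto
  also have "\<dots> \<le> card {i\<in>{1..s+1}. \<delta> (k j) < \<delta> i}"
    using \<open>\<not> e (l j) < \<delta> (k j)\<close> by (intro card_mono) auto
  also have "\<dots> \<le> s + 1 - j"
    using card_strict_superlevel_sorted_perm_le[where f = \<delta>, OF k k_sorted] j by simp
  finally show False
    by simp
qed

theorem lemma2p1:
  fixes n s d :: nat and \<Delta> :: "nat set set"
    and F G :: "nat \<Rightarrow> nat set" and \<delta> e :: "nat \<Rightarrow> nat"
  assumes qf: "quasi_forest n \<Delta>"
    and dim: "d = Max (card ` \<Delta>)"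
    and F_inj: "inj_on F {1..s+1}"
    and F_facets: "F ` {1..s+1} = facets \<Delta>"
    and leaf: "\<forall>j\<in>{1..s}. is_leaf (gen (F ` {j..s+1})) (F j)"
    and branch: "\<forall>j\<in>{1..s}. is_branch (gen (F ` {j..s+1})) (F j) (G j)"
    and delta: "\<forall>j\<in>{1..s+1}. \<delta> j = card (F j)"
    and e: "\<forall>j\<in>{1..s}. e j = card (F j \<inter> G j)"
  shows "(\<Sum>i=0..d. monom (int (fcount \<Delta> i)) i)
           = (\<Sum>j=1..s+1. [:1, 1:] ^ \<delta> j) - (\<Sum>j=1..s. ([:1, 1:] :: int poly) ^ e j)
     \<and> (\<forall>k l. bij_betw k {1..s+1} {1..s+1} \<and> bij_betw l {1..s} {1..s}
          \<and> 0 < \<delta> (k 1)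
          \<and> (\<forall>i j. 1 \<le> i \<and> i \<le> j \<and> j \<le> s+1 \<longrightarrow> \<delta> (k i) \<le> \<delta> (k j))
          \<and> \<delta> (k (s+1)) = d
          \<and> (\<forall>i j. 1 \<le> i \<and> i \<le> j \<and> j \<le> s \<longrightarrow> e (l i) \<le> e (l j))
          \<longrightarrow> (\<forall>j\<in>{1..s}. e (l j) < \<delta> (k j)))"
proof -
  have sc: "simplicial_complex n \<Delta>"
    using qf by (simp add: quasi_forest_def)
  interpret leaf_order s F G
    using sc F_inj F_facets branch by (intro leaf_order_facets) auto
  have "(\<Sum>i=0..d. monom (int (fcount \<Delta> i)) i) = face_poly \<Delta>"
    using simplicial_complex_finite(1)[OF sc] dim by (intro sum_fcount_monom_eq_face_poly) auto
  also have "\<dots> = face_poly (gen (F ` {1..s+1}))"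
    unfolding F_facets simplicial_complex_gen_facets[OF sc] ..
  also have "\<dots> = (\<Sum>j=1..s+1. [:1, 1:] ^ card (F j)) - (\<Sum>j=1..s. [:1, 1:] ^ card (F j \<inter> G j))"
    using face_poly_gen_from[of 1] by simp
  also have "\<dots> = (\<Sum>j=1..s+1. [:1, 1:] ^ \<delta> j) - (\<Sum>j=1..s. [:1, 1:] ^ e j)"
    using delta e by (intro arg_cong2[where f = minus] sum.cong) auto
  finally have part_a: "(\<Sum>i=0..d. monom (int (fcount \<Delta> i)) i)
      = (\<Sum>j=1..s+1. [:1, 1:] ^ \<delta> j) - (\<Sum>j=1..s. ([:1, 1:] :: int poly) ^ e j)" .
  have count: "\<exists>i\<in>{1..s}. t \<le> e i \<Longrightarrow>
      card {i\<in>{1..s}. t \<le> e i} < card {i\<in>{1..s+1}. t < \<delta> i}" for t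
    using card_Int_branch_less delta e by (intro card_superlevel_less) auto
  have part_b: "e (l j) < \<delta> (k j)"
    if "bij_betw k {1..s+1} {1..s+1}" "bij_betw l {1..s} {1..s}"
      "\<forall>i j. 1 \<le> i \<and> i \<le> j \<and> j \<le> s+1 \<longrightarrow> \<delta> (k i) \<le> \<delta> (k j)"
      "\<forall>i j. 1 \<le> i \<and> i \<le> j \<and> j \<le> s \<longrightarrow> e (l i) \<le> e (l j)"
      "j \<in> {1..s}" for k l j
    using that by (intro sorted_perm_less[OF count]) auto
  show ?thesis
    using part_a part_b by blast
qed

end
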